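(* Let $\mathcal{C}$ be a concept class over $\{\pm1\}^n$, $\mathcal{D}$ a class of distributions closed under restrictions, and $D^\star$ a distribution that has a depth-$d$, size-$s$ subcube partition $L^\star=(\rho_1,\dots,\rho_s)$ into $\mathcal{D}$ (ordered arbitrarily). Let $A$ be a base learner that learns $\mathcal{C}$ over distributions in $\mathcal{D}$ to expected error $\le\frac{\varepsilon}{\log(1/\varepsilon)}$ with sample complexity $m$. Let \[ m_{\mathrm{train}}\ge s\cdot\frac{\log(1/\varepsilon)}{\varepsilon}\cdot\max(2m,8), \] let $f\in\mathcal{C}$, let $S_{\mathrm{train}}$ consist of $m_{\mathrm{train}}$ i.i.d. examples from $D^\star_f$, and let $\mathcal{H}$ be the random mapping $\rho\mapsto A((S_{\mathrm{train}})_\rho)$ over all restrictions $\rho$ of depth $\le d$ (randomness from $S_{\mathrm{train}}$ and $A$). Then \[ \mathbb{E}_{\mathcal{H}}\left[\mathrm{error}(L^\star\circ\mathcal{H},D^\star_f)\right]\le\frac{2\varepsilon}{\log(1/\varepsilon)}. \]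
   Context: A restriction is $\rho\in\{\pm1,\star\}^n$; $x\in\rho$ means $x_i=\rho_i$ or $\rho_i=\star$ for all $i$; depth of $\rho$ = number of non-$\star$ coordinates. $D_\rho$ is $D$ conditioned on $x\in\rho$; for labeled $S$, $S_\rho=\{(x,y)\in S:x\in\rho\}$. $\mathcal{D}$ is closed under restrictions if $D\in\mathcal{D}\Rightarrow D_\rho\in\mathcal{D}$ for all $\rho$. $D_f$ is the distribution of $(x,f(x))$, $x\sim D$; $\mathrm{error}(h,P)=\Pr_{(x,y)\sim P}[h(x)\neq y]$ ($\bot$ counts as an error). $A$ learns $\mathcal{C}$ to expected error $\varepsilon'$ over $D$ with $m$ samples if for every $f\in\mathcal{C}$, given (at least) $m$ i.i.d. samples from $D_f$, its output $h$ has $\mathbb{E}[\mathrm{error}(h,D_f)]\le\varepsilon'$. $D^\star$ has a depth-$d$, size-$s$ subcube partition into $\mathcal{D}$ if there are $s$ pairwise disjoint restrictions $\rho_1,\dots,\rho_s$, each of depth $\le d$, such that every $x$ in the support of $D^\star$ lies in some $\rho_i$ and $(D^\star)_{\rho_i}\in\mathcal{D}$ for all $i$. For an ordered list $L$ of restrictions, $L\circ\mathcal{H}(x)=\mathcal{H}(\rho)(x)$ for the first $\rho\in L$ containing $x$, and $\bot$ if none does. *)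

theory Defs
  imports "HOL-Probability.Probability"
begin

text \<open>Points of the cube \{+-1\}^n are boolean lists of length n (True = +1, False = -1).
  A restriction is a list of length n over bool option (None = star).\<close>

type_synonym point = "bool list"
type_synonym restr = "bool option list"
type_synonym hyp = "point \<Rightarrow> bool option"   \<comment> \<open>None = bottom\<close>
type_synonym sample = "(point \<times> bool) list"

definition cube :: "nat \<Rightarrow> point set" where
  "cube n = {x. length x = n}"

definition is_restriction :: "nat \<Rightarrow> restr \<Rightarrow> bool" where
  "is_restriction n \<rho> \<longleftrightarrow> length \<rho> = n"

definition in_restr :: "point \<Rightarrow> restr \<Rightarrow> bool" where
  "in_restr x \<rho> \<longleftrightarrow> length x = length \<rho> \<and>
     (\<forall>i < length \<rho>. \<rho> ! i = None \<or> \<rho> ! i = Some (x ! i))"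

definition pts :: "restr \<Rightarrow> point set" where
  "pts \<rho> = {x. in_restr x \<rho>}"

definition depth :: "restr \<Rightarrow> nat" where
  "depth \<rho> = card {i. i < length \<rho> \<and> \<rho> ! i \<noteq> None}"

text \<open>D conditioned on x in rho (only meaningful when the event has positive probability).\<close>
definition restrict_dist :: "point pmf \<Rightarrow> restr \<Rightarrow> point pmf" where
  "restrict_dist D \<rho> = cond_pmf D (pts \<rho>)"

definition restrict_sample :: "sample \<Rightarrow> restr \<Rightarrow> sample" where
  "restrict_sample S \<rho> = filter (\<lambda>(x, y). in_restr x \<rho>) S"

definition closed_under_restrictions :: "nat \<Rightarrow> point pmf set \<Rightarrow> bool" where
  "closed_under_restrictions n \<D> \<longleftrightarrow>
     (\<forall>D \<in> \<D>. \<forall>\<rho>. is_restriction n \<rho> \<and> set_pmf D \<inter> pts \<rho> \<noteq> {} \<longrightarrow>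
        restrict_dist D \<rho> \<in> \<D>)"

definition labeled :: "point pmf \<Rightarrow> (point \<Rightarrow> bool) \<Rightarrow> (point \<times> bool) pmf" where
  "labeled D f = map_pmf (\<lambda>x. (x, f x)) D"

definition error :: "hyp \<Rightarrow> (point \<times> bool) pmf \<Rightarrow> real" where
  "error h P = measure_pmf.prob P {(x, y). h x \<noteq> Some y}"

definition learns :: "(sample \<Rightarrow> hyp pmf) \<Rightarrow> (point \<Rightarrow> bool) set \<Rightarrow> point pmf set
                       \<Rightarrow> real \<Rightarrow> nat \<Rightarrow> bool" where
  "learns A \<C> \<D> \<epsilon>' m \<longleftrightarrow>
     (\<forall>D \<in> \<D>. \<forall>f \<in> \<C>. \<forall>k \<ge> m.
        measure_pmf.expectation
          (replicate_pmf k (labeled D f) \<bind> A) (\<lambda>h. error h (labeled D f)) \<le> \<epsilon>')"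

definition subcube_partition :: "nat \<Rightarrow> point pmf \<Rightarrow> point pmf set \<Rightarrow> nat \<Rightarrow> nat \<Rightarrow> restr list \<Rightarrow> bool" where
  "subcube_partition n Dstar \<D> d s L \<longleftrightarrow>
     length L = s \<and>
     (\<forall>\<rho> \<in> set L. is_restriction n \<rho> \<and> depth \<rho> \<le> d) \<and>
     (\<forall>i < length L. \<forall>j < length L. i \<noteq> j \<longrightarrow> pts (L ! i) \<inter> pts (L ! j) = {}) \<and>
     (\<forall>x \<in> set_pmf Dstar. \<exists>\<rho> \<in> set L. in_restr x \<rho>) \<and>
     (\<forall>\<rho> \<in> set L. set_pmf Dstar \<inter> pts \<rho> \<noteq> {} \<longrightarrow> restrict_dist Dstar \<rho> \<in> \<D>)"

definition list_compose :: "restr list \<Rightarrow> (restr \<Rightarrow> hyp) \<Rightarrow> hyp" where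
  "list_compose L H x = (case find (in_restr x) L of None \<Rightarrow> None | Some \<rho> \<Rightarrow> H \<rho> x)"

definition restrs_upto :: "nat \<Rightarrow> nat \<Rightarrow> restr set" where
  "restrs_upto n d = {\<rho>. is_restriction n \<rho> \<and> depth \<rho> \<le> d}"

definition random_H :: "(sample \<Rightarrow> hyp pmf) \<Rightarrow> nat \<Rightarrow> nat \<Rightarrow> nat \<Rightarrow> (point \<times> bool) pmf
                         \<Rightarrow> (restr \<Rightarrow> hyp) pmf" where
  "random_H A n d mtrain P =
     replicate_pmf mtrain P \<bind>
       (\<lambda>S. Pi_pmf (restrs_upto n d) (\<lambda>_. None) (\<lambda>\<rho>. A (restrict_sample S \<rho>)))"

end

(* Each hypothesis H rho is learned from the subsample of S_train falling into rho. Given its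
   size k, that subsample is k i.i.d. draws from the restricted labeled distribution, and k itself
   is Bin(m_train, p) with p = Pr[x in rho]. Hence the expected error of H rho inside rho is at most
   p (eps' + Pr[k < m]) with eps' = eps / ln(1/eps), and p Pr[Bin(N, p) < m] <= m / (N + 1).
   Since L o H errs only where the piece containing x errs, summing over the s pieces gives
   eps' + s m / (m_train + 1) <= 2 eps'. *)
theory Submission
  imports Defs
begin

lemma integrable_measure_pmf_bounded:
  fixes h :: "'a \<Rightarrow> real"
  assumes "\<And>x. \<bar>h x\<bar> \<le> B"
  shows "integrable (measure_pmf M) h"
  by (rule measure_pmf.integrable_const_bound[where B=B]) (auto simp: assms)

lemma expectation_bind_pmf:
  fixes h :: "'b \<Rightarrow> real"
  assumes "\<And>y. \<bar>h y\<bar> \<le> B"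
  shows "measure_pmf.expectation (M \<bind> F) h =
         measure_pmf.expectation M (\<lambda>x. measure_pmf.expectation (F x) h)"
  unfolding measure_pmf_bind
  by (rule integral_bind[where B=B and B'=1 and K="count_space UNIV"])
     (auto simp: assms measure_pmf.emeasure_space_1 measure_pmf.finite_measure_axioms
        space_subprob_algebra measure_pmf.subprob_space_axioms)

lemma measure_cond_pmf:
  assumes "set_pmf M \<inter> Q \<noteq> {}"
  shows "measure_pmf.prob (cond_pmf M Q) X = measure_pmf.prob M (Q \<inter> X) / measure_pmf.prob M Q"
  using emeasure_measure_pmf_not_zero[OF assms]
  by (simp add: cond_pmf.rep_eq[OF assms] measure_pmf.emeasure_finite)

lemma bind_pmf_if_mem_eq_bernoulli:
  assumes ne: "set_pmf M \<inter> Q \<noteq> {}"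
  shows "M \<bind> (\<lambda>x. if x \<in> Q then G x else H) =
         bernoulli_pmf (measure_pmf.prob M Q) \<bind> (\<lambda>b. if b then cond_pmf M Q \<bind> G else H)"
proof (cases "set_pmf M \<subseteq> Q")
  case True
  then have "measure_pmf.prob M Q = 1"
    by (simp add: measure_pmf.prob_eq_1 AE_measure_pmf_iff subset_iff)
  moreover have "cond_pmf M Q = M"
    using ne True by (intro pmf_eqI) (auto simp: pmf_cond set_pmf_eq \<open>measure_pmf.prob M Q = 1\<close>)
  moreover have "M \<bind> (\<lambda>x. if x \<in> Q then G x else H) = M \<bind> G"
    using True by (intro bind_pmf_cong) auto
  moreover have "bernoulli_pmf 1 = return_pmf True"
    by (rule pmf_eqI) (auto simp: indicator_def)
  ultimately show ?thesis by (simp add: bind_return_pmf)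
next
  case False
  define p where "p = measure_pmf.prob M Q"
  have ne': "set_pmf M \<inter> -Q \<noteq> {}" using False by auto
  have p0: "0 < p" using ne by (auto simp: p_def intro: measure_pmf_posI)
  have "0 < measure_pmf.prob M (-Q)" using ne' by (auto intro: measure_pmf_posI)
  then have p1: "p < 1"
    using measure_pmf.prob_compl[of Q M] by (simp add: p_def Compl_eq_Diff_UNIV)
  have split: "bernoulli_pmf p \<bind> (\<lambda>b. cond_pmf M {x. b = (x \<in> Q)}) = M"
  proof (rule bind_cond_pmf_cancel)
    fix b :: bool
    show "set_pmf M \<inter> {x. b = (x \<in> Q)} \<noteq> {}" using ne ne' by (cases b) auto
  next
    fix y show "set_pmf (bernoulli_pmf p) \<inter> {b. b = (y \<in> Q)} \<noteq> {}" using p0 p1 by auto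
  next
    fix b y assume "b = (y \<in> Q)"
    have "measure_pmf.prob M (UNIV - Q) = 1 - p"
      using measure_pmf.prob_compl[of Q M] by (simp add: p_def)
    moreover have "{b. b} = {True}" "{b. \<not> b} = {False}" "{x. x \<notin> Q} = UNIV - Q" by auto
    ultimately show "measure_pmf.prob M {x. b = (x \<in> Q)} =
                     measure_pmf.prob (bernoulli_pmf p) {b. b = (y \<in> Q)}"
      using p0 p1 \<open>b = (y \<in> Q)\<close> by (cases b) (simp_all add: p_def measure_pmf_single)
  qed
  have "M \<bind> (\<lambda>x. if x \<in> Q then G x else H) =
        bernoulli_pmf p \<bind> (\<lambda>b. cond_pmf M {x. b = (x \<in> Q)} \<bind> (\<lambda>x. if x \<in> Q then G x else H))"
    by (subst split[symmetric]) (simp add: bind_assoc_pmf)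
  also have "\<dots> = bernoulli_pmf p \<bind> (\<lambda>b. if b then cond_pmf M Q \<bind> G else H)"
  proof (intro bind_pmf_cong refl)
    fix b :: bool
    have ne'': "set_pmf M \<inter> {x. x \<notin> Q} \<noteq> {}" using ne' by auto
    show "cond_pmf M {x. b = (x \<in> Q)} \<bind> (\<lambda>x. if x \<in> Q then G x else H) =
          (if b then cond_pmf M Q \<bind> G else H)"
    proof (cases b)
      case True
      then show ?thesis by (auto simp: set_cond_pmf[OF ne] intro!: bind_pmf_cong)
    next
      case False
      have "cond_pmf M {x. x \<notin> Q} \<bind> (\<lambda>x. if x \<in> Q then G x else H) =
            cond_pmf M {x. x \<notin> Q} \<bind> (\<lambda>_. H)"
        by (intro bind_pmf_cong) (auto simp: set_cond_pmf[OF ne''])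
      with False show ?thesis by simp
    qed
  qed
  finally show ?thesis by (simp add: p_def)
qed

lemma filter_replicate_pmf:
  assumes ne: "\<exists>x \<in> set_pmf M. Q x"
  shows "map_pmf (filter Q) (replicate_pmf N M) =
         binomial_pmf N (measure_pmf.prob M {x. Q x}) \<bind>
           (\<lambda>k. replicate_pmf k (cond_pmf M {x. Q x}))"
proof (induction N)
  case 0
  have "measure_pmf.prob M {x. Q x} \<in> {0..1}" by auto
  then show ?case by (simp add: binomial_pmf_0 bind_return_pmf)
next
  case (Suc N)
  define p where "p = measure_pmf.prob M {x. Q x}"
  define B where "B = binomial_pmf N p"
  define MQ where "MQ = cond_pmf M {x. Q x}"
  have p: "p \<in> {0..1}" by (auto simp: p_def)
  have "map_pmf (filter Q) (replicate_pmf (Suc N) M) =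
        M \<bind> (\<lambda>x. map_pmf (\<lambda>ys. if Q x then x # ys else ys) (map_pmf (filter Q) (replicate_pmf N M)))"
    by (simp add: map_pmf_def bind_assoc_pmf bind_return_pmf)
  also have "\<dots> = M \<bind> (\<lambda>x. if x \<in> {x. Q x} then B \<bind> (\<lambda>k. map_pmf (Cons x) (replicate_pmf k MQ))
                   else B \<bind> (\<lambda>k. replicate_pmf k MQ))"
    unfolding Suc B_def MQ_def p_def by (intro bind_pmf_cong refl) (auto simp: map_bind_pmf)
  also have "\<dots> = bernoulli_pmf p \<bind> (\<lambda>b. if b then MQ \<bind> (\<lambda>x. B \<bind> (\<lambda>k. map_pmf (Cons x) (replicate_pmf k MQ)))
                   else B \<bind> (\<lambda>k. replicate_pmf k MQ))"
    unfolding p_def MQ_def using ne by (intro bind_pmf_if_mem_eq_bernoulli) auto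
  also have "\<dots> = bernoulli_pmf p \<bind> (\<lambda>b. B \<bind> (\<lambda>k. replicate_pmf ((if b then 1 else 0) + k) MQ))"
    by (intro bind_pmf_cong refl) (auto simp: bind_commute_pmf[of MQ B] map_pmf_def)
  also have "\<dots> = binomial_pmf (Suc N) p \<bind> (\<lambda>k. replicate_pmf k MQ)"
    by (simp add: binomial_pmf_Suc[OF p] B_def bind_assoc_pmf bind_return_pmf)
  finally show ?case by (simp add: p_def MQ_def)
qed

lemma binomial_pmf_lessThan_le:
  assumes p: "p \<in> {0..1}"
  shows "p * measure_pmf.prob (binomial_pmf N p) {..<m} \<le> real m / real (Suc N)"
proof -
  have p0: "0 \<le> p" "p \<le> 1" using p by auto
  have shift: "p * pmf (binomial_pmf N p) k * real (Suc N) =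
               real (Suc k) * pmf (binomial_pmf (Suc N) p) (Suc k)" for k
  proof -
    have choose: "real (Suc N) * real (N choose k) = real (Suc N choose Suc k) * real (Suc k)"
      using Suc_times_binomial_eq[of N k] by (metis of_nat_mult)
    have "p * pmf (binomial_pmf N p) k * real (Suc N) =
          (real (Suc N) * real (N choose k)) * (p ^ Suc k * (1 - p) ^ (N - k))"
      by (simp add: pmf_binomial[OF p0] del: of_nat_Suc)
    also have "\<dots> = real (Suc k) * (real (Suc N choose Suc k) * p ^ Suc k * (1 - p) ^ (Suc N - Suc k))"
      unfolding choose by simp
    also have "\<dots> = real (Suc k) * pmf (binomial_pmf (Suc N) p) (Suc k)"
      by (simp add: pmf_binomial[OF p0] del: of_nat_Suc)
    finally show ?thesis .
  qed
  have "p * measure_pmf.prob (binomial_pmf N p) {..<m} = (\<Sum>k<m. p * pmf (binomial_pmf N p) k)"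
    by (simp add: measure_measure_pmf_finite sum_distrib_left)
  also have "\<dots> \<le> (\<Sum>k<m. real m / real (Suc N) * pmf (binomial_pmf (Suc N) p) (Suc k))"
  proof (rule sum_mono)
    fix k assume "k \<in> {..<m}"
    then have "real (Suc k) * pmf (binomial_pmf (Suc N) p) (Suc k) \<le> real m * pmf (binomial_pmf (Suc N) p) (Suc k)"
      by (intro mult_right_mono) auto
    then show "p * pmf (binomial_pmf N p) k \<le> real m / real (Suc N) * pmf (binomial_pmf (Suc N) p) (Suc k)"
      using shift[of k] by (simp add: field_simps del: of_nat_Suc)
  qed
  also have "\<dots> = real m / real (Suc N) * measure_pmf.prob (binomial_pmf (Suc N) p) (Suc ` {..<m})"
    by (simp add: measure_measure_pmf_finite sum_distrib_left sum.reindex)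
  also have "\<dots> \<le> real m / real (Suc N)"
    by (intro mult_left_le) auto
  finally show ?thesis .
qed

lemma finite_restrs_upto: "finite (restrs_upto n d)"
proof (rule finite_subset)
  show "restrs_upto n d \<subseteq> {xs. set xs \<subseteq> (UNIV :: bool option set) \<and> length xs = n}"
    by (auto simp: restrs_upto_def is_restriction_def)
qed (rule finite_lists_length_eq, simp)

lemma error_labeled: "error h (labeled D f) = measure_pmf.prob D {x. h x \<noteq> Some (f x)}"
  unfolding error_def labeled_def by (simp add: vimage_def)

definition local_error :: "point pmf \<Rightarrow> (point \<Rightarrow> bool) \<Rightarrow> restr \<Rightarrow> hyp \<Rightarrow> real" where
  "local_error D f \<rho> h = measure_pmf.prob D {x \<in> pts \<rho>. h x \<noteq> Some (f x)}"

lemma local_error_le_measure: "local_error D f \<rho> h \<le> measure_pmf.prob D (pts \<rho>)"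
  unfolding local_error_def by (intro measure_pmf.finite_measure_mono) auto

lemma abs_local_error_le_1: "\<bar>local_error D f \<rho> h\<bar> \<le> 1"
  by (simp add: local_error_def)

lemma local_error_eq_error_restrict_dist:
  assumes ne: "set_pmf D \<inter> pts \<rho> \<noteq> {}"
  shows "local_error D f \<rho> h = measure_pmf.prob D (pts \<rho>) * error h (labeled (restrict_dist D \<rho>) f)"
proof -
  have "pts \<rho> \<inter> {x. h x \<noteq> Some (f x)} = {x \<in> pts \<rho>. h x \<noteq> Some (f x)}" by blast
  then have "error h (labeled (restrict_dist D \<rho>) f) = local_error D f \<rho> h / measure_pmf.prob D (pts \<rho>)"
    unfolding error_labeled restrict_dist_def local_error_def measure_cond_pmf[OF ne] by (simp only:)
  moreover have "measure_pmf.prob D (pts \<rho>) \<noteq> 0" using ne by (simp add: measure_pmf_zero_iff)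
  ultimately show ?thesis by simp
qed

lemma error_list_compose_le_sum_local_error:
  assumes cover: "\<forall>x \<in> set_pmf D. \<exists>\<rho> \<in> set L. in_restr x \<rho>"
  shows "error (list_compose L H) (labeled D f) \<le> (\<Sum>\<rho> \<in> set L. local_error D f \<rho> (H \<rho>))"
proof -
  let ?err = "{x. list_compose L H x \<noteq> Some (f x)}"
  let ?local_err = "\<lambda>\<rho>. {x \<in> pts \<rho>. H \<rho> x \<noteq> Some (f x)}"
  have "?err \<inter> set_pmf D \<subseteq> (\<Union>\<rho> \<in> set L. ?local_err \<rho>)"
  proof
    fix x assume x: "x \<in> ?err \<inter> set_pmf D"
    then have "find (in_restr x) L \<noteq> None" using cover by (auto simp: find_None_iff)
    then obtain \<rho> where found: "find (in_restr x) L = Some \<rho>" by blast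
    then have "\<rho> \<in> set L" "x \<in> pts \<rho>" by (auto simp: find_Some_iff pts_def)
    moreover have "H \<rho> x \<noteq> Some (f x)" using x found by (simp add: list_compose_def)
    ultimately show "x \<in> (\<Union>\<rho> \<in> set L. ?local_err \<rho>)" by blast
  qed
  then have "measure_pmf.prob D (?err \<inter> set_pmf D) \<le> measure_pmf.prob D (\<Union>\<rho> \<in> set L. ?local_err \<rho>)"
    by (rule measure_pmf.finite_measure_mono) simp
  also have "\<dots> \<le> (\<Sum>\<rho> \<in> set L. local_error D f \<rho> (H \<rho>))"
    unfolding local_error_def by (rule measure_pmf.finite_measure_subadditive_finite) auto
  finally show ?thesis by (simp add: error_labeled measure_Int_set_pmf)
qed

lemma random_H_component:
  assumes "\<rho> \<in> restrs_upto n d"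
  shows "map_pmf (\<lambda>H. H \<rho>) (random_H A n d N P) = replicate_pmf N P \<bind> (\<lambda>S. A (restrict_sample S \<rho>))"
  unfolding random_H_def map_bind_pmf by (simp add: Pi_pmf_component[OF finite_restrs_upto] assms)

lemma restrict_sample_replicate_pmf:
  assumes ne: "set_pmf D \<inter> pts \<rho> \<noteq> {}"
  shows "map_pmf (\<lambda>S. restrict_sample S \<rho>) (replicate_pmf N (labeled D f)) =
         binomial_pmf N (measure_pmf.prob D (pts \<rho>)) \<bind>
           (\<lambda>k. replicate_pmf k (labeled (restrict_dist D \<rho>) f))"
proof -
  let ?Q = "\<lambda>(x, y :: bool). in_restr x \<rho>"
  have preimage: "(\<lambda>x. (x, f x)) -` {z. ?Q z} = pts \<rho>" by (auto simp: pts_def)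
  have "\<exists>z \<in> set_pmf (labeled D f). ?Q z" using ne by (auto simp: labeled_def pts_def)
  moreover have "measure_pmf.prob (labeled D f) {z. ?Q z} = measure_pmf.prob D (pts \<rho>)"
    by (simp add: labeled_def preimage pts_def)
  moreover have "cond_pmf (labeled D f) {z. ?Q z} = labeled (restrict_dist D \<rho>) f"
    unfolding labeled_def restrict_dist_def using ne preimage by (subst cond_map_pmf) auto
  ultimately show ?thesis
    unfolding restrict_sample_def by (simp add: filter_replicate_pmf)
qed

lemma learns_expected_error_le:
  assumes learner: "learns A \<C> \<D> e m" and "D \<in> \<D>" "f \<in> \<C>" "0 \<le> e"
  shows "measure_pmf.expectation (replicate_pmf k (labeled D f) \<bind> A) (\<lambda>h. error h (labeled D f))
         \<le> e + indicator {..<m} k"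
proof (cases "m \<le> k")
  case True
  then show ?thesis using assms unfolding learns_def by auto
next
  case False
  have "measure_pmf.expectation (replicate_pmf k (labeled D f) \<bind> A) (\<lambda>h. error h (labeled D f))
        \<le> measure_pmf.expectation (replicate_pmf k (labeled D f) \<bind> A) (\<lambda>h. 1)"
    by (intro integral_mono integrable_measure_pmf_bounded[where B=1]) (auto simp: error_def)
  then show ?thesis using False \<open>0 \<le> e\<close> by simp
qed

lemma expected_local_error_le:
  assumes \<rho>: "\<rho> \<in> restrs_upto n d"
    and in_\<D>: "set_pmf D \<inter> pts \<rho> \<noteq> {} \<Longrightarrow> restrict_dist D \<rho> \<in> \<D>"
    and learner: "learns A \<C> \<D> e m" and e: "0 \<le> e" and f: "f \<in> \<C>"
  shows "measure_pmf.expectation (random_H A n d N (labeled D f)) (\<lambda>H. local_error D f \<rho> (H \<rho>))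
         \<le> measure_pmf.prob D (pts \<rho>) * e + real m / real (Suc N)"
proof (cases "set_pmf D \<inter> pts \<rho> = {}")
  case True
  then have "measure_pmf.prob D (pts \<rho>) = 0" by (simp add: measure_pmf_zero_iff)
  then have "local_error D f \<rho> h = 0" for h
    using local_error_le_measure[of D f \<rho> h] measure_nonneg[of D "{x \<in> pts \<rho>. h x \<noteq> Some (f x)}"]
    unfolding local_error_def by linarith
  then show ?thesis using e by simp
next
  case False
  define pr where "pr = measure_pmf.prob D (pts \<rho>)"
  define D\<rho> where "D\<rho> = labeled (restrict_dist D \<rho>) f"
  define B where "B = binomial_pmf N pr"
  have pr: "pr \<in> {0..1}" by (simp add: pr_def)
  have "map_pmf (\<lambda>H. H \<rho>) (random_H A n d N (labeled D f)) =
        map_pmf (\<lambda>S. restrict_sample S \<rho>) (replicate_pmf N (labeled D f)) \<bind> A"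
    by (simp add: random_H_component[OF \<rho>] bind_map_pmf comp_def)
  also have "\<dots> = B \<bind> (\<lambda>k. replicate_pmf k D\<rho> \<bind> A)"
    by (simp add: restrict_sample_replicate_pmf[OF False] B_def D\<rho>_def pr_def bind_assoc_pmf)
  finally have H\<rho>: "map_pmf (\<lambda>H. H \<rho>) (random_H A n d N (labeled D f)) = B \<bind> (\<lambda>k. replicate_pmf k D\<rho> \<bind> A)" .
  have expected_error_le: "measure_pmf.expectation (replicate_pmf k D\<rho> \<bind> A) (local_error D f \<rho>)
                           \<le> pr * e + pr * indicator {..<m} k" for k
  proof -
    have "measure_pmf.expectation (replicate_pmf k D\<rho> \<bind> A) (local_error D f \<rho>) =
          pr * measure_pmf.expectation (replicate_pmf k D\<rho> \<bind> A) (\<lambda>h. error h D\<rho>)"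
      unfolding local_error_eq_error_restrict_dist[OF False] pr_def D\<rho>_def
      by (rule integral_mult_right_zero)
    also have "\<dots> \<le> pr * (e + indicator {..<m} k)"
      using learns_expected_error_le[OF learner in_\<D>[OF False] f e] pr
      by (intro mult_left_mono) (auto simp: D\<rho>_def)
    finally show ?thesis by (simp add: distrib_left)
  qed
  have "measure_pmf.expectation (random_H A n d N (labeled D f)) (\<lambda>H. local_error D f \<rho> (H \<rho>)) =
        measure_pmf.expectation (B \<bind> (\<lambda>k. replicate_pmf k D\<rho> \<bind> A)) (local_error D f \<rho>)"
    by (simp flip: H\<rho>)
  also have "\<dots> = measure_pmf.expectation B
                     (\<lambda>k. measure_pmf.expectation (replicate_pmf k D\<rho> \<bind> A) (local_error D f \<rho>))"
    by (rule expectation_bind_pmf[OF abs_local_error_le_1])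
  also have "\<dots> \<le> measure_pmf.expectation B (\<lambda>k. pr * e + pr * indicator {..<m} k)"
    unfolding B_def using pr by (intro integral_mono expected_error_le integrable_binomial_pmf)
  also have "\<dots> = pr * e + pr * measure_pmf.prob B {..<m}"
    unfolding B_def using pr by simp
  also have "\<dots> \<le> pr * e + real m / real (Suc N)"
    using binomial_pmf_lessThan_le[OF pr] by (simp add: B_def)
  finally show ?thesis by (simp add: pr_def)
qed

lemma sum_measure_subcube_partition_le_1:
  assumes "subcube_partition n D \<D> d s L"
  shows "(\<Sum>\<rho> \<in> set L. measure_pmf.prob M (pts \<rho>)) \<le> 1"
proof -
  have "disjoint_family_on pts (set L)"
    unfolding disjoint_family_on_def
  proof (intro ballI impI)
    fix \<rho> \<rho>' assume "\<rho> \<in> set L" "\<rho>' \<in> set L" "\<rho> \<noteq> \<rho>'"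
    then obtain i j where "i < length L" "j < length L" "i \<noteq> j" "L ! i = \<rho>" "L ! j = \<rho>'"
      by (metis in_set_conv_nth)
    with assms show "pts \<rho> \<inter> pts \<rho>' = {}" unfolding subcube_partition_def by blast
  qed
  then have "(\<Sum>\<rho> \<in> set L. measure_pmf.prob M (pts \<rho>)) = measure_pmf.prob M (\<Union>\<rho> \<in> set L. pts \<rho>)"
    by (intro measure_pmf.finite_measure_finite_Union[symmetric]) auto
  then show ?thesis by simp
qed

theorem expected_error_list_compose_le:
  assumes part: "subcube_partition n D \<D> d s L"
    and learner: "learns A \<C> \<D> e m" and e: "0 \<le> e" and f: "f \<in> \<C>"
  shows "measure_pmf.expectation (random_H A n d N (labeled D f))
           (\<lambda>H. error (list_compose L H) (labeled D f)) \<le> e + real s * (real m / real (Suc N))"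
proof -
  let ?H = "random_H A n d N (labeled D f)"
  have integrable_local_error: "integrable ?H (\<lambda>H. local_error D f \<rho> (H \<rho>))" for \<rho>
    by (rule integrable_measure_pmf_bounded[OF abs_local_error_le_1])
  have integrable_error: "integrable ?H (\<lambda>H. error (list_compose L H) (labeled D f))"
    by (rule integrable_measure_pmf_bounded[where B=1]) (simp add: error_def)
  have "measure_pmf.expectation ?H (\<lambda>H. error (list_compose L H) (labeled D f)) \<le>
        measure_pmf.expectation ?H (\<lambda>H. \<Sum>\<rho> \<in> set L. local_error D f \<rho> (H \<rho>))"
    using part unfolding subcube_partition_def
    by (intro integral_mono error_list_compose_le_sum_local_error integrable_error
          Bochner_Integration.integrable_sum integrable_local_error) auto
  also have "\<dots> = (\<Sum>\<rho> \<in> set L. measure_pmf.expectation ?H (\<lambda>H. local_error D f \<rho> (H \<rho>)))"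
    by (intro Bochner_Integration.integral_sum integrable_local_error)
  also have "\<dots> \<le> (\<Sum>\<rho> \<in> set L. measure_pmf.prob D (pts \<rho>) * e + real m / real (Suc N))"
    using part unfolding subcube_partition_def
    by (intro sum_mono expected_local_error_le[OF _ _ learner e f]) (auto simp: restrs_upto_def)
  also have "\<dots> = e * (\<Sum>\<rho> \<in> set L. measure_pmf.prob D (pts \<rho>)) + real (card (set L)) * (real m / real (Suc N))"
    by (simp add: sum.distrib sum_distrib_left mult.commute)
  also have "\<dots> \<le> e + real s * (real m / real (Suc N))"
    using sum_measure_subcube_partition_le_1[OF part] card_length[of L] part e
    by (intro add_mono mult_right_le_one_le mult_right_mono sum_nonneg) (auto simp: subcube_partition_def)
  finally show ?thesis .
qed

theorem corollary7p4:
  fixes n d s m mtrain :: nat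
    and \<C> :: "(point \<Rightarrow> bool) set"
    and \<D> :: "point pmf set"
    and Dstar :: "point pmf"
    and L :: "restr list"
    and A :: "sample \<Rightarrow> hyp pmf"
    and \<epsilon> :: real
    and f :: "point \<Rightarrow> bool"
  assumes eps: "0 < \<epsilon>" "\<epsilon> < 1"
    and D_cube: "\<forall>D \<in> \<D>. set_pmf D \<subseteq> cube n"
    and closed: "closed_under_restrictions n \<D>"
    and part: "subcube_partition n Dstar \<D> d s L"
    and learner: "learns A \<C> \<D> (\<epsilon> / ln (1 / \<epsilon>)) m"
    and mtrain: "real mtrain \<ge> real s * (ln (1 / \<epsilon>) / \<epsilon>) * max (2 * real m) 8"
    and f: "f \<in> \<C>"
  shows "measure_pmf.expectation (random_H A n d mtrain (labeled Dstar f))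
           (\<lambda>H. error (list_compose L H) (labeled Dstar f)) \<le> 2 * \<epsilon> / ln (1 / \<epsilon>)"
proof -
  \<comment> \<open>Only \<open>mtrain \<ge> s m ln(1/\<epsilon>)/\<epsilon>\<close> is needed; \<open>closed\<close> and \<open>D_cube\<close> are not, since \<open>part\<close>
    already places every nonempty piece \<open>restrict_dist Dstar \<rho>\<close> in \<open>\<D>\<close>.\<close>
  define e where "e = \<epsilon> / ln (1 / \<epsilon>)"
  have ln_pos: "0 < ln (1 / \<epsilon>)" using eps by simp
  have "real s * (ln (1 / \<epsilon>) / \<epsilon>) * real m \<le> real s * (ln (1 / \<epsilon>) / \<epsilon>) * max (2 * real m) 8"
    using ln_pos eps by (intro mult_left_mono) auto
  also have "\<dots> \<le> real (Suc mtrain)" using mtrain by linarith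
  finally have "real s * real m * ln (1 / \<epsilon>) \<le> \<epsilon> * real (Suc mtrain)"
    using eps by (simp add: field_simps del: of_nat_Suc)
  then have "real s * (real m / real (Suc mtrain)) * ln (1 / \<epsilon>) \<le> \<epsilon>"
    by (simp add: field_simps del: of_nat_Suc)
  then have "real s * (real m / real (Suc mtrain)) \<le> e"
    using ln_pos by (simp add: e_def pos_le_divide_eq)
  moreover have "measure_pmf.expectation (random_H A n d mtrain (labeled Dstar f))
                   (\<lambda>H. error (list_compose L H) (labeled Dstar f)) \<le> e + real s * (real m / real (Suc mtrain))"
    using eps ln_pos by (intro expected_error_list_compose_le[OF part learner[folded e_def] _ f]) (simp add: e_def)
  ultimately show ?thesis by (simp add: e_def)
qed

end
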